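(* Let $m\ge 1$. The chip-firing process on the self-loop graph, beginning with $4m-1$ chips at site $0$, terminates with exactly $1$ chip at each of the positions $-m$, $0$ and $m$; exactly $2$ chips at each of the positions $-m+1,\dots,-1$ and $1,\dots,m-1$; and $0$ chips elsewhere.
   Context: The self-loop graph is the path graph on $\mathbb{Z}$ (each $i$ adjacent to $i\pm1$) with one self-loop at every vertex. A site can fire if it holds at least $3$ chips; firing sends one chip to each of the two neighboring sites and keeps one (the chip along the self-loop) at the site. The process terminates when every site has at most $2$ chips. *)

theory Defs
  imports Main
begin

type_synonym config = "int \<Rightarrow> nat"

text \<open>Firing site v (allowed when it holds at least 3 chips): one chip to each neighbour,
  one chip stays (self-loop), so site v loses 2 chips net.\<close>
definition fire :: "config \<Rightarrow> int \<Rightarrow> config" where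
  "fire c v = (\<lambda>w. if w = v then c v - 2
                    else if w = v - 1 \<or> w = v + 1 then c w + 1
                    else c w)"

definition can_fire :: "config \<Rightarrow> int \<Rightarrow> bool" where
  "can_fire c v \<longleftrightarrow> c v \<ge> 3"

definition chip_step :: "config \<Rightarrow> config \<Rightarrow> bool" where
  "chip_step c d \<longleftrightarrow> (\<exists>v. can_fire c v \<and> d = fire c v)"

definition stable :: "config \<Rightarrow> bool" where
  "stable c \<longleftrightarrow> (\<forall>v. c v \<le> 2)"

definition terminates_with :: "config \<Rightarrow> config \<Rightarrow> bool" where
  "terminates_with c d \<longleftrightarrow>
     \<not> (\<exists>f. f 0 = c \<and> (\<forall>n. chip_step (f n) (f (Suc n)))) \<and>
     chip_step\<^sup>*\<^sup>* c d \<and> stable d \<and>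
     (\<forall>e. chip_step\<^sup>*\<^sup>* c e \<and> stable e \<longrightarrow> e = d)"

end

theory Submission
  imports Defs "HOL-Library.Confluence"
begin

text \<open>Firing preserves the number of chips and raises the second moment \<open>\<Sum> w\<^sup>2 c(w)\<close> by
  exactly \<open>(v-1)\<^sup>2 + (v+1)\<^sup>2 - 2v\<^sup>2 = 2\<close>. Starting from a pile at the origin, the support stays
  an interval around \<open>0\<close> with no empty site inside, so it has length at most the number of
  chips and the second moment is bounded: every firing sequence is finite. Firings at
  distinct sites commute, so the process is strongly confluent and its stable configuration
  is unique. That this configuration is the claimed one follows by induction on \<open>m\<close>: the four
  extra chips at \<open>0\<close> set off two waves, in each of which a single extra chip on a block of 2s
  leaves a hole at its mirror-image site and pushes one chip out over each end of the block.\<close>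

lemma int_fire:
  assumes "2 \<le> c v"
  shows "int (fire c v w) = int (c w) + (if w = v - 1 then 1 else 0)
           + (if w = v + 1 then 1 else 0) - (if w = v then 2 else 0)"
  using assms by (auto simp: fire_def of_nat_diff)

lemma sum_weighted_fire:
  assumes "finite B" "{v - 1, v, v + 1} \<subseteq> B" "2 \<le> c v"
  shows "(\<Sum>w\<in>B. g w * int (fire c v w))
           = (\<Sum>w\<in>B. g w * int (c w)) + g (v - 1) + g (v + 1) - 2 * g v"
proof -
  have "(\<Sum>w\<in>B. g w * int (fire c v w))
          = (\<Sum>w\<in>B. g w * int (c w) + (if w = v - 1 then g w else 0)
               + (if w = v + 1 then g w else 0) - (if w = v then 2 * g w else 0))"
    by (rule sum.cong) (simp_all add: int_fire[of c v, OF assms(3)] algebra_simps)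
  also have "\<dots> = (\<Sum>w\<in>B. g w * int (c w)) + g (v - 1) + g (v + 1) - 2 * g v"
    using assms by (simp add: sum.distrib sum_subtractf sum.delta)
  finally show ?thesis .
qed

lemma fire_commute:
  assumes "3 \<le> c u" "3 \<le> c v" "u \<noteq> v"
  shows "3 \<le> fire c u v" "fire (fire c u) v = fire (fire c v) u"
  using assms by (auto simp: fire_def fun_eq_iff)

lemma chip_step_fire: "3 \<le> c v \<Longrightarrow> chip_step c (fire c v)"
  unfolding chip_step_def can_fire_def by blast

lemma chip_stepE:
  assumes "chip_step c d"
  obtains v where "3 \<le> c v" "d = fire c v"
  using assms unfolding chip_step_def can_fire_def by blast

lemma stable_no_chip_step: "stable c \<Longrightarrow> \<not> chip_step c d"
  unfolding stable_def by (metis chip_stepE not_less_eq_eq numeral_3_eq_3 numeral_2_eq_2)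

lemma strong_confluentp_chip_step: "strong_confluentp chip_step"
proof
  fix c c1 c2
  assume "chip_step c c1" "chip_step c c2"
  then obtain u v where u: "3 \<le> c u" "c1 = fire c u" and v: "3 \<le> c v" "c2 = fire c v"
    by (auto elim!: chip_stepE)
  show "\<exists>d. chip_step\<^sup>*\<^sup>* c1 d \<and> chip_step\<^sup>=\<^sup>= c2 d"
  proof (cases "u = v")
    case True
    then show ?thesis using u v by auto
  next
    case False
    then have "chip_step c1 (fire c1 v)" "chip_step c2 (fire c1 v)"
      using fire_commute[OF u(1) v(1)] fire_commute(1)[OF v(1) u(1)] u v
      by (metis chip_step_fire)+
    then show ?thesis by blast
  qed
qed

lemma confluentp_normal_forms_eq:
  assumes "confluentp r" "r\<^sup>*\<^sup>* x y" "r\<^sup>*\<^sup>* x z" "\<And>u. \<not> r y u" "\<And>u. \<not> r z u"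
  shows "y = z"
proof -
  obtain u where "r\<^sup>*\<^sup>* y u" "r\<^sup>*\<^sup>* z u"
    using confluentpD[OF assms(1-3)] by blast
  then show ?thesis
    using assms(4,5) by (metis converse_rtranclpE)
qed

lemma stable_reachable_unique:
  assumes "chip_step\<^sup>*\<^sup>* c d" "stable d" "chip_step\<^sup>*\<^sup>* c e" "stable e"
  shows "e = d"
  using confluentp_normal_forms_eq[OF strong_confluentp_imp_confluentp[OF strong_confluentp_chip_step]]
    assms stable_no_chip_step by metis

lemma no_infinite_chain_bounded_potential:
  fixes \<phi> :: "'a \<Rightarrow> int"
  assumes step: "\<And>x y. r x y \<Longrightarrow> P x \<Longrightarrow> P y \<and> \<phi> x < \<phi> y"
    and bound: "\<And>x. P x \<Longrightarrow> \<phi> x \<le> B" and "P x\<^sub>0"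
  shows "\<not> (\<exists>f. f 0 = x\<^sub>0 \<and> (\<forall>n. r (f n) (f (Suc n))))"
proof
  assume "\<exists>f. f 0 = x\<^sub>0 \<and> (\<forall>n. r (f n) (f (Suc n)))"
  then obtain f where f: "f 0 = x\<^sub>0" "\<And>n. r (f n) (f (Suc n))" by blast
  have "P (f n) \<and> \<phi> x\<^sub>0 + int n \<le> \<phi> (f n)" for n
  proof (induction n)
    case 0
    then show ?case using f(1) \<open>P x\<^sub>0\<close> by simp
  next
    case (Suc n)
    then show ?case using step[OF f(2)] by fastforce
  qed
  then have "\<phi> x\<^sub>0 + int (Suc (nat (B - \<phi> x\<^sub>0))) \<le> B" using bound by (meson order_trans)
  then show False by (simp split: if_splits)
qed

definition gap_free :: "int \<Rightarrow> config \<Rightarrow> bool" where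
  "gap_free N c \<longleftrightarrow> (\<exists>a b. a \<le> 0 \<and> 0 \<le> b \<and> (\<forall>w. w \<notin> {a..b} \<longrightarrow> c w = 0)
     \<and> (\<forall>w\<in>{a<..<b}. 1 \<le> c w) \<and> (\<Sum>w\<in>{a..b}. int (c w)) = N)"

lemma gap_freeE:
  assumes "gap_free N c"
  obtains a b where "a \<le> 0" "0 \<le> b" "\<forall>w. w \<notin> {a..b} \<longrightarrow> c w = 0"
    "\<forall>w\<in>{a<..<b}. 1 \<le> c w" "(\<Sum>w\<in>{a..b}. int (c w)) = N"
  using assms unfolding gap_free_def by blast

lemma gap_free_boundedE:
  assumes "gap_free N c"
  obtains a b where "{a..b} \<subseteq> {-(N + 1)..N + 1}" "\<forall>w. w \<notin> {a..b} \<longrightarrow> c w = 0"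
    "(\<Sum>w\<in>{a..b}. int (c w)) = N"
proof -
  obtain a b where ab: "a \<le> 0" "0 \<le> b" "\<forall>w. w \<notin> {a..b} \<longrightarrow> c w = 0"
    "\<forall>w\<in>{a<..<b}. 1 \<le> c w" "(\<Sum>w\<in>{a..b}. int (c w)) = N"
    using assms by (rule gap_freeE)
  have "int (card {a<..<b}) = (\<Sum>w\<in>{a<..<b}. 1)" by simp
  also have "\<dots> \<le> (\<Sum>w\<in>{a<..<b}. int (c w))"
    using ab(4) by (intro sum_mono) force
  also have "\<dots> \<le> N"
    unfolding ab(5)[symmetric] by (intro sum_mono2) auto
  finally have "b - a - 1 \<le> N" by (auto split: if_splits)
  then have "{a..b} \<subseteq> {-(N + 1)..N + 1}" using ab(1,2) by auto
  then show thesis using ab(3,5) by (rule that)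
qed

lemma gap_free_sum:
  assumes "gap_free N c"
  shows "(\<Sum>w\<in>{-(N + 2)..N + 2}. int (c w)) = N"
proof -
  obtain a b where ab: "{a..b} \<subseteq> {-(N + 1)..N + 1}" "\<forall>w. w \<notin> {a..b} \<longrightarrow> c w = 0"
    "(\<Sum>w\<in>{a..b}. int (c w)) = N"
    using assms by (rule gap_free_boundedE)
  have "(\<Sum>w\<in>{-(N + 2)..N + 2}. int (c w)) = (\<Sum>w\<in>{a..b}. int (c w))"
    using ab(1,2) by (intro sum.mono_neutral_right) auto
  then show ?thesis using ab(3) by simp
qed

lemma gap_free_fire:
  assumes "gap_free N c" "3 \<le> c v"
  shows "gap_free N (fire c v)"
proof -
  obtain a b where ab: "a \<le> 0" "0 \<le> b" "\<forall>w. w \<notin> {a..b} \<longrightarrow> c w = 0"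
    "\<forall>w\<in>{a<..<b}. 1 \<le> c w" "(\<Sum>w\<in>{a..b}. int (c w)) = N"
    using assms(1) by (rule gap_freeE)
  have v: "v \<in> {a..b}" using ab(3) assms(2) by auto
  define a' where "a' = min a (v - 1)"
  define b' where "b' = max b (v + 1)"
  have "{v - 1, v, v + 1} \<subseteq> {a'..b'}" by (auto simp: a'_def b'_def)
  then have "(\<Sum>w\<in>{a'..b'}. int (fire c v w)) = (\<Sum>w\<in>{a'..b'}. int (c w))"
    using sum_weighted_fire[of "{a'..b'}" v c "\<lambda>_. 1"] assms(2) by simp
  also have "\<dots> = (\<Sum>w\<in>{a..b}. int (c w))"
    using ab(3) by (intro sum.mono_neutral_right) (auto simp: a'_def b'_def)
  finally have "(\<Sum>w\<in>{a'..b'}. int (fire c v w)) = N" using ab(5) by simp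
  moreover have "fire c v w = 0" if "w \<notin> {a'..b'}" for w
  proof -
    have "w \<notin> {a..b}" "w \<notin> {v - 1, v, v + 1}" using that by (auto simp: a'_def b'_def)
    then show ?thesis using ab(3) by (simp add: fire_def)
  qed
  moreover have "1 \<le> fire c v w" if "w \<in> {a'<..<b'}" for w
  proof -
    have "w \<in> {a<..<b} \<or> w \<in> {v - 1, v, v + 1}" using that v by (auto simp: a'_def b'_def)
    then show ?thesis using ab(4) assms(2) by (auto simp: fire_def)
  qed
  moreover have "a' \<le> 0" "0 \<le> b'" using ab(1,2) by (simp_all add: a'_def b'_def)
  ultimately show ?thesis unfolding gap_free_def by (intro exI[of _ a'] exI[of _ b']) auto
qed

definition second_moment :: "int \<Rightarrow> config \<Rightarrow> int" where
  "second_moment N c = (\<Sum>w\<in>{-(N + 2)..N + 2}. w\<^sup>2 * int (c w))"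

lemma second_moment_fire:
  assumes "gap_free N c" "3 \<le> c v"
  shows "second_moment N (fire c v) = second_moment N c + 2"
proof -
  obtain a b where ab: "{a..b} \<subseteq> {-(N + 1)..N + 1}" "\<forall>w. w \<notin> {a..b} \<longrightarrow> c w = 0"
    using assms(1) by (rule gap_free_boundedE)
  have "v \<in> {a..b}" using ab(2) assms(2) by auto
  with ab(1) have "v \<in> {-(N + 1)..N + 1}" by (rule subsetD)
  then have "(\<Sum>w\<in>{-(N + 2)..N + 2}. w\<^sup>2 * int (fire c v w)) =
     (\<Sum>w\<in>{-(N + 2)..N + 2}. w\<^sup>2 * int (c w)) + (v - 1)\<^sup>2 + (v + 1)\<^sup>2 - 2 * v\<^sup>2"
    using assms(2) by (intro sum_weighted_fire) auto
  then show ?thesis unfolding second_moment_def by (simp add: power2_eq_square algebra_simps)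
qed

lemma second_moment_le:
  assumes "gap_free N c"
  shows "second_moment N c \<le> (N + 2)\<^sup>2 * N"
proof -
  have "second_moment N c \<le> (\<Sum>w\<in>{-(N + 2)..N + 2}. (N + 2)\<^sup>2 * int (c w))"
    unfolding second_moment_def
  proof (intro sum_mono mult_right_mono)
    fix w assume "w \<in> {-(N + 2)..N + 2}"
    then show "w\<^sup>2 \<le> (N + 2)\<^sup>2" by (simp add: abs_le_square_iff[symmetric] abs_le_iff)
  qed simp
  also have "\<dots> = (N + 2)\<^sup>2 * N"
    using gap_free_sum[OF assms] by (simp add: sum_distrib_left[symmetric])
  finally show ?thesis .
qed

lemma chip_step_gap_free:
  assumes "chip_step c d" "gap_free N c"
  shows "gap_free N d \<and> second_moment N c < second_moment N d"
proof -
  obtain v where "3 \<le> c v" "d = fire c v" using assms(1) by (rule chip_stepE)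
  then show ?thesis using gap_free_fire second_moment_fire assms(2) by simp
qed

lemma chip_step_rtranclp_add:
  "chip_step\<^sup>*\<^sup>* c d \<Longrightarrow> chip_step\<^sup>*\<^sup>* (\<lambda>w. c w + k w) (\<lambda>w. d w + k w)"
proof (induction rule: rtranclp_induct)
  case base
  then show ?case by simp
next
  case (step d e)
  obtain v where v: "3 \<le> d v" "e = fire d v" using step(2) by (rule chip_stepE)
  then have "fire (\<lambda>w. d w + k w) v = (\<lambda>w. e w + k w)" by (auto simp: fire_def fun_eq_iff)
  moreover have "3 \<le> d v + k v" using v by simp
  ultimately show ?case using step(3) chip_step_fire by (metis rtranclp.rtrancl_into_rtrancl)
qed

text \<open>What an extra chip at \<open>x\<close> on a block \<open>[p, q]\<close> of 2s leaves behind once it has been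
  fired away: the hole lands at the mirror image \<open>p + q - x\<close>, and one chip spills over each end.\<close>
definition wave :: "int \<Rightarrow> int \<Rightarrow> int \<Rightarrow> config \<Rightarrow> config" where
  "wave p q x c = (\<lambda>w. if p \<le> w \<and> w \<le> q then (if w = p + q - x then 1 else 2)
      else if w = p - 1 \<or> w = q + 1 then c w + 1 else c w)"

lemma chip_step_rtranclp_wave:
  assumes "p \<le> x" "x \<le> q" "\<And>w. p \<le> w \<Longrightarrow> w \<le> q \<Longrightarrow> c w = (if w = x then 3 else 2)"
  shows "chip_step\<^sup>*\<^sup>* c (wave p q x c)"
  using assms
proof (induction "nat (q - p)" arbitrary: p q x c rule: less_induct)
  case less
  define c1 where "c1 = fire c x"
  have s1: "chip_step c c1" unfolding c1_def using less.prems by (intro chip_step_fire) auto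
  consider "x = p" "x = q" | "x = p" "x \<noteq> q" | "x \<noteq> p" "x = q" | "x \<noteq> p" "x \<noteq> q" by blast
  then show ?case
  proof cases
    case 1
    then have "c1 = wave p q x c" using less.prems by (auto simp: c1_def fire_def wave_def fun_eq_iff)
    then show ?thesis using s1 by simp
  next
    case 2
    have "chip_step\<^sup>*\<^sup>* c1 (wave (x + 1) q (x + 1) c1)"
      using less.prems 2 by (intro less.hyps) (auto simp: c1_def fire_def)
    moreover have "wave (x + 1) q (x + 1) c1 = wave p q x c" using less.prems 2
      by (auto simp: c1_def fire_def wave_def fun_eq_iff)
    ultimately show ?thesis using s1 by simp
  next
    case 3
    have "chip_step\<^sup>*\<^sup>* c1 (wave p (q - 1) (q - 1) c1)"
      using less.prems 3 by (intro less.hyps) (auto simp: c1_def fire_def)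
    moreover have "wave p (q - 1) (q - 1) c1 = wave p q x c" using less.prems 3
      by (auto simp: c1_def fire_def wave_def fun_eq_iff)
    ultimately show ?thesis using s1 by simp
  next
    case 4
    txt \<open>Firing \<open>x\<close> puts an extra chip on each neighbour. The right one sweeps \<open>[x + 1, q]\<close>,
      leaving its hole at \<open>q\<close>; the left one then sweeps \<open>[p, q - 1]\<close>.\<close>
    define c2 where "c2 = wave (x + 1) q (x + 1) c1"
    have "chip_step\<^sup>*\<^sup>* c1 c2"
      unfolding c2_def using less.prems 4 by (intro less.hyps) (auto simp: c1_def fire_def)
    moreover have "chip_step\<^sup>*\<^sup>* c2 (wave p (q - 1) (x - 1) c2)"
      using less.prems 4 by (intro less.hyps) (auto simp: c2_def wave_def c1_def fire_def)
    moreover have "wave p (q - 1) (x - 1) c2 = wave p q x c" using less.prems 4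
      by (auto simp: c2_def c1_def fire_def wave_def fun_eq_iff)
    ultimately show ?thesis using s1 by (metis converse_rtranclp_into_rtranclp rtranclp_trans)
  qed
qed

definition pile :: "int \<Rightarrow> config" where
  "pile m = (\<lambda>v. if v = 0 then nat (4 * m - 1) else 0)"

definition pile_final :: "int \<Rightarrow> config" where
  "pile_final m = (\<lambda>v. if v = -m \<or> v = 0 \<or> v = m then 1
                else if (-m < v \<and> v < 0) \<or> (0 < v \<and> v < m) then 2
                else 0)"

lemma chip_step_rtranclp_pile_final: "1 \<le> m \<Longrightarrow> chip_step\<^sup>*\<^sup>* (pile m) (pile_final m)"
proof (induction m rule: int_ge_induct)
  case base
  have "fire (pile 1) 0 = pile_final 1" by (auto simp: pile_def pile_final_def fire_def fun_eq_iff)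
  then show ?case using chip_step_fire[of "pile 1" 0] by (simp add: pile_def)
next
  case (step m)
  define two :: config where "two = (\<lambda>w. if w = 0 then 2 else 0)"
  define A where "A = (\<lambda>w. pile_final m w + two w)"
  define B where "B = (\<lambda>w. wave (-m + 1) (m - 1) 0 A w + two w)"
  have "pile (m + 1) = (\<lambda>w. pile m w + (two w + two w))"
    using step(1) by (auto simp: pile_def two_def fun_eq_iff)
  then have "chip_step\<^sup>*\<^sup>* (pile (m + 1)) (\<lambda>w. A w + two w)"
    using chip_step_rtranclp_add[OF step(2), of "\<lambda>w. two w + two w"] by (simp add: A_def add.assoc)
  also have "chip_step\<^sup>*\<^sup>* (\<lambda>w. A w + two w) B"
    unfolding B_def using step(1)
    by (intro chip_step_rtranclp_add chip_step_rtranclp_wave) (auto simp: A_def pile_final_def two_def)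
  also have "chip_step\<^sup>*\<^sup>* B (wave (-m) m 0 B)"
    using step(1) by (intro chip_step_rtranclp_wave) (auto simp: B_def A_def wave_def pile_final_def two_def)
  also have "wave (-m) m 0 B = pile_final (m + 1)"
    using step(1) by (auto simp: B_def A_def wave_def pile_final_def two_def fun_eq_iff)
  finally show ?case .
qed

theorem lemma3p8:
  fixes m :: int
  assumes "m \<ge> 1"
  shows "terminates_with (\<lambda>v. if v = 0 then nat (4 * m - 1) else 0)
           (\<lambda>v. if v = -m \<or> v = 0 \<or> v = m then 1
                else if (-m < v \<and> v < 0) \<or> (0 < v \<and> v < m) then 2
                else 0)"
proof -
  define N where "N = 4 * m - 1"
  have "gap_free N (pile m)"
    unfolding gap_free_def using assms by (intro exI[of _ 0]) (auto simp: pile_def N_def)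
  with chip_step_gap_free[of _ _ N] second_moment_le[of N]
  have "\<not> (\<exists>f. f 0 = pile m \<and> (\<forall>n. chip_step (f n) (f (Suc n))))"
    by (rule no_infinite_chain_bounded_potential[where P = "gap_free N" and \<phi> = "second_moment N"])
  moreover have reach: "chip_step\<^sup>*\<^sup>* (pile m) (pile_final m)"
    using assms by (rule chip_step_rtranclp_pile_final)
  moreover have stable: "stable (pile_final m)" by (simp add: stable_def pile_final_def)
  ultimately have "terminates_with (pile m) (pile_final m)"
    unfolding terminates_with_def using stable_reachable_unique[OF reach stable] by blast
  then show ?thesis by (simp only: pile_def pile_final_def)
qed

end
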